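(* A formula $\varphi\in\mathcal{L}$ is valid in all constructive Chellas models if and only if it is derivable in $\mathsf{ConstCK}$.
   Context: Language $\mathcal{L}$: formulas $\varphi ::= p \mid \bot \mid \varphi\wedge\varphi \mid \varphi\vee\varphi \mid \varphi\to\varphi \mid \varphi \mathrel{\Box\!\!\to} \varphi \mid \varphi \mathrel{\Diamond\!\!\to}\varphi$; $\neg\varphi:=\varphi\to\bot$, $\top:=\neg\bot$, $\varphi\leftrightarrow\psi:=(\varphi\to\psi)\wedge(\psi\to\varphi)$. $\mathsf{ConstCK}$: any axiomatisation of intuitionistic propositional logic in $\mathcal{L}$ with modus ponens, plus axioms CM$_\Box$: $(\varphi\mathrel{\Box\!\!\to}\psi\wedge\chi)\to(\varphi\mathrel{\Box\!\!\to}\psi)\wedge(\varphi\mathrel{\Box\!\!\to}\chi)$; CC$_\Box$: $(\varphi\mathrel{\Box\!\!\to}\psi)\wedge(\varphi\mathrel{\Box\!\!\to}\chi)\to(\varphi\mathrel{\Box\!\!\to}\psi\wedge\chi)$; CN$_\Box$: $\varphi\mathrel{\Box\!\!\to}\top$; CN$_\Diamond$: $\neg(\varphi\mathrel{\Diamond\!\!\to}\bot)$; CK$_\Diamond$: $(\varphi\mathrel{\Box\!\!\to}(\psi\to\chi))\to((\varphi\mathrel{\Diamond\!\!\to}\psi)\to(\varphi\mathrel{\Diamond\!\!\to}\chi))$; rules RA$_\Box$: from $\varphi\leftrightarrow\rho$ infer $(\varphi\mathrel{\Box\!\!\to}\psi)\leftrightarrow(\rho\mathrel{\Box\!\!\to}\psi)$;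 RC$_\Box$: from $\psi\leftrightarrow\chi$ infer $(\varphi\mathrel{\Box\!\!\to}\psi)\leftrightarrow(\varphi\mathrel{\Box\!\!\to}\chi)$; RA$_\Diamond$, RC$_\Diamond$: the same with $\mathrel{\Diamond\!\!\to}$. A constructive Chellas model is $M=\langle W,\le,R,V\rangle$ with $W$ a nonempty set, $\le$ a reflexive transitive relation on $W$, $V:W\to 2^{Atm}$ monotone ($w\le w'$ implies $V(w)\subseteq V(w')$), and $R$ associating to each $X\subseteq W$ a binary relation $R_X$ on $W$. Satisfaction: $w\Vdash p$ iff $p\in V(w)$; $w\not\Vdash\bot$; $\wedge,\vee$ pointwise; $w\Vdash\varphi\to\psi$ iff for all $w'\ge w$, $w'\Vdash\varphi$ implies $w'\Vdash\psi$; with $[\varphi]=\{w\mid w\Vdash\varphi\}$: $w\Vdash\varphi\mathrel{\Box\!\!\to}\psi$ iff for all $w',v$ with $w\le w'$ and $w'R_{[\varphi]}v$, $v\Vdash\psi$; $w\Vdash\varphi\mathrel{\Diamond\!\!\to}\psi$ iff for all $w'\ge w$ there is $v$ with $w'R_{[\varphi]}v$ and $v\Vdash\psi$. A formula is valid in $M$ if satisfied at every world of $M$. *)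

theory Defs
  imports Main
begin

datatype 'a fm =
    Atom 'a
  | Bot
  | Conj "'a fm" "'a fm"
  | Disj "'a fm" "'a fm"
  | Imp "'a fm" "'a fm"
  | BoxTo "'a fm" "'a fm"
  | DiaTo "'a fm" "'a fm"

definition Neg :: "'a fm \<Rightarrow> 'a fm" where "Neg \<phi> = Imp \<phi> Bot"
definition Top :: "'a fm" where "Top = Neg Bot"
definition Iff :: "'a fm \<Rightarrow> 'a fm \<Rightarrow> 'a fm" where
  "Iff \<phi> \<psi> = Conj (Imp \<phi> \<psi>) (Imp \<psi> \<phi>)"

inductive ConstCK :: "'a fm \<Rightarrow> bool" where
  K:   "ConstCK (Imp \<phi> (Imp \<psi> \<phi>))"
| S:   "ConstCK (Imp (Imp \<phi> (Imp \<psi> \<chi>)) (Imp (Imp \<phi> \<psi>) (Imp \<phi> \<chi>)))"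
| C1:  "ConstCK (Imp (Conj \<phi> \<psi>) \<phi>)"
| C2:  "ConstCK (Imp (Conj \<phi> \<psi>) \<psi>)"
| C3:  "ConstCK (Imp \<phi> (Imp \<psi> (Conj \<phi> \<psi>)))"
| D1:  "ConstCK (Imp \<phi> (Disj \<phi> \<psi>))"
| D2:  "ConstCK (Imp \<psi> (Disj \<phi> \<psi>))"
| D3:  "ConstCK (Imp (Imp \<phi> \<chi>) (Imp (Imp \<psi> \<chi>) (Imp (Disj \<phi> \<psi>) \<chi>)))"
| EFQ: "ConstCK (Imp Bot \<phi>)"
| MP:  "ConstCK (Imp \<phi> \<psi>) \<Longrightarrow> ConstCK \<phi> \<Longrightarrow> ConstCK \<psi>"
| CMbox: "ConstCK (Imp (BoxTo \<phi> (Conj \<psi> \<chi>)) (Conj (BoxTo \<phi> \<psi>) (BoxTo \<phi> \<chi>)))"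
| CCbox: "ConstCK (Imp (Conj (BoxTo \<phi> \<psi>) (BoxTo \<phi> \<chi>)) (BoxTo \<phi> (Conj \<psi> \<chi>)))"
| CNbox: "ConstCK (BoxTo \<phi> Top)"
| CNdia: "ConstCK (Neg (DiaTo \<phi> Bot))"
| CKdia: "ConstCK (Imp (BoxTo \<phi> (Imp \<psi> \<chi>)) (Imp (DiaTo \<phi> \<psi>) (DiaTo \<phi> \<chi>)))"
| RAbox: "ConstCK (Iff \<phi> \<rho>) \<Longrightarrow> ConstCK (Iff (BoxTo \<phi> \<psi>) (BoxTo \<rho> \<psi>))"
| RCbox: "ConstCK (Iff \<psi> \<chi>) \<Longrightarrow> ConstCK (Iff (BoxTo \<phi> \<psi>) (BoxTo \<phi> \<chi>))"
| RAdia: "ConstCK (Iff \<phi> \<rho>) \<Longrightarrow> ConstCK (Iff (DiaTo \<phi> \<psi>) (DiaTo \<rho> \<psi>))"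
| RCdia: "ConstCK (Iff \<psi> \<chi>) \<Longrightarrow> ConstCK (Iff (DiaTo \<phi> \<psi>) (DiaTo \<phi> \<chi>))"

record ('w, 'a) cmodel =
  worlds :: "'w set"
  leq :: "'w \<Rightarrow> 'w \<Rightarrow> bool"
  rel :: "'w set \<Rightarrow> 'w \<Rightarrow> 'w \<Rightarrow> bool"
  val :: "'w \<Rightarrow> 'a set"

definition is_cmodel :: "('w, 'a) cmodel \<Rightarrow> bool" where
  "is_cmodel M \<longleftrightarrow>
     worlds M \<noteq> {} \<and>
     (\<forall>w\<in>worlds M. leq M w w) \<and>
     (\<forall>u\<in>worlds M. \<forall>v\<in>worlds M. \<forall>w\<in>worlds M. leq M u v \<longrightarrow> leq M v w \<longrightarrow> leq M u w) \<and>
     (\<forall>u v. leq M u v \<longrightarrow> u \<in> worlds M \<and> v \<in> worlds M) \<and>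
     (\<forall>u v. leq M u v \<longrightarrow> val M u \<subseteq> val M v) \<and>
     (\<forall>X u v. rel M X u v \<longrightarrow> u \<in> worlds M \<and> v \<in> worlds M)"

fun sat :: "('w, 'a) cmodel \<Rightarrow> 'w \<Rightarrow> 'a fm \<Rightarrow> bool" where
  "sat M w (Atom p) \<longleftrightarrow> p \<in> val M w"
| "sat M w Bot \<longleftrightarrow> False"
| "sat M w (Conj \<phi> \<psi>) \<longleftrightarrow> sat M w \<phi> \<and> sat M w \<psi>"
| "sat M w (Disj \<phi> \<psi>) \<longleftrightarrow> sat M w \<phi> \<or> sat M w \<psi>"
| "sat M w (Imp \<phi> \<psi>) \<longleftrightarrow>
     (\<forall>w'\<in>worlds M. leq M w w' \<longrightarrow> sat M w' \<phi> \<longrightarrow> sat M w' \<psi>)"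
| "sat M w (BoxTo \<phi> \<psi>) \<longleftrightarrow>
     (\<forall>w'\<in>worlds M. \<forall>v\<in>worlds M. leq M w w' \<longrightarrow>
        rel M {u\<in>worlds M. sat M u \<phi>} w' v \<longrightarrow> sat M v \<psi>)"
| "sat M w (DiaTo \<phi> \<psi>) \<longleftrightarrow>
     (\<forall>w'\<in>worlds M. leq M w w' \<longrightarrow>
        (\<exists>v\<in>worlds M. rel M {u\<in>worlds M. sat M u \<phi>} w' v \<and> sat M v \<psi>))"

definition valid_in :: "('w, 'a) cmodel \<Rightarrow> 'a fm \<Rightarrow> bool" where
  "valid_in M \<phi> \<longleftrightarrow> (\<forall>w\<in>worlds M. sat M w \<phi>)"

end

theory Submission
  imports Defs
begin

text \<open>
  Soundness is an induction on derivations, driven by persistence of satisfaction along \<open>\<le>\<close>.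
  Completeness uses a canonical model whose worlds are prime theories \<open>\<Gamma>\<close>, each carrying one
  extra formula \<open>\<psi>\<close>. The \<open>R\<^bsub>[\<phi>]\<^esub>\<close>-successors of \<open>(\<Gamma>, \<psi>)\<close> are the prime theories that contain
  every \<open>\<chi>\<close> with \<open>\<phi> \<box>\<rightarrow> \<chi> \<in> \<Gamma>\<close> and, unless \<open>\<phi> \<diamond>\<rightarrow> \<psi> \<in> \<Gamma>\<close>, omit \<open>\<psi>\<close>.
  So if \<open>\<phi> \<diamond>\<rightarrow> \<psi> \<notin> \<Gamma>\<close>, the single world \<open>(\<Gamma>, \<psi>)\<close> above \<open>\<Gamma>\<close> has no successor satisfying \<open>\<psi>\<close>,
  while \<open>\<phi> \<diamond>\<rightarrow> \<psi> \<in> \<Gamma>\<close> together with \<open>CK\<^sub>\<diamond>\<close> and \<open>CN\<^sub>\<diamond>\<close> provides a successor containing \<open>\<psi>\<close>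
  from every world above \<open>\<Gamma>\<close>. As \<open>R\<close> is indexed by truth sets rather than formulas, the rules RA
  are what make the successors depend only on the truth set of the antecedent.
\<close>

section \<open>Soundness\<close>

lemma cmodel_leq_refl: "is_cmodel M \<Longrightarrow> w \<in> worlds M \<Longrightarrow> leq M w w"
  unfolding is_cmodel_def by blast

lemma cmodel_leq_trans: "is_cmodel M \<Longrightarrow> leq M u v \<Longrightarrow> leq M v w \<Longrightarrow> leq M u w"
  unfolding is_cmodel_def by blast

lemma cmodel_val_mono: "is_cmodel M \<Longrightarrow> leq M u v \<Longrightarrow> val M u \<subseteq> val M v"
  unfolding is_cmodel_def by blast

lemma sat_mono:
  assumes M: "is_cmodel M"
  shows "leq M w w' \<Longrightarrow> sat M w \<phi> \<Longrightarrow> sat M w' \<phi>"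
  by (induction \<phi> arbitrary: w w') (auto dest: cmodel_val_mono[OF M] intro: cmodel_leq_trans[OF M])

lemma sat_Iff:
  "sat M w (Iff \<phi> \<psi>) \<longleftrightarrow> (\<forall>w'\<in>worlds M. leq M w w' \<longrightarrow> (sat M w' \<phi> \<longleftrightarrow> sat M w' \<psi>))"
  by (auto simp: Iff_def)

lemma sat_DiaTo_mp:
  assumes M: "is_cmodel M"
    and "sat M w (BoxTo \<phi> (Imp \<psi> \<chi>))" and "sat M w (DiaTo \<phi> \<psi>)"
  shows "sat M w (DiaTo \<phi> \<chi>)"
  using assms(2,3) cmodel_leq_refl[OF M] by simp blast

lemma ConstCK_sat:
  assumes "ConstCK \<phi>" and M: "is_cmodel M" and "w \<in> worlds M"
  shows "sat M w \<phi>"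
  using assms(1,3)
proof (induction arbitrary: w rule: ConstCK.induct)
  case (S \<phi> \<psi> \<chi>)
  then show ?case
    using cmodel_leq_refl[OF M] cmodel_leq_trans[OF M] by simp
next
  case (CKdia \<phi> \<psi> \<chi>)
  show ?case
    unfolding sat.simps(5) by (meson sat_DiaTo_mp[OF M] sat_mono[OF M])
next
  case (RAbox \<phi> \<rho> \<psi>)
  then have "{u\<in>worlds M. sat M u \<phi>} = {u\<in>worlds M. sat M u \<rho>}"
    using cmodel_leq_refl[OF M] by (auto simp: sat_Iff)
  then show ?case
    by (simp add: sat_Iff)
next
  case (RAdia \<phi> \<rho> \<psi>)
  then have "{u\<in>worlds M. sat M u \<phi>} = {u\<in>worlds M. sat M u \<rho>}"
    using cmodel_leq_refl[OF M] by (auto simp: sat_Iff)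
  then show ?case
    by (simp add: sat_Iff)
next
  case (RCbox \<psi> \<chi> \<phi>)
  then show ?case
    using cmodel_leq_refl[OF M] by (auto simp: sat_Iff)
next
  case (RCdia \<psi> \<chi> \<phi>)
  then show ?case
    using cmodel_leq_refl[OF M] by (auto simp: sat_Iff)
qed (auto simp: Top_def Neg_def dest: sat_mono[OF M] cmodel_leq_trans[OF M]
    intro: cmodel_leq_refl[OF M])

lemma ConstCK_valid: "ConstCK \<phi> \<Longrightarrow> is_cmodel M \<Longrightarrow> valid_in M \<phi>"
  by (simp add: valid_in_def ConstCK_sat)

lemma ConstCK_not_Bot: "\<not> ConstCK Bot"
proof
  let ?M = "\<lparr>worlds = {()}, leq = \<lambda>_ _. True, rel = \<lambda>_ _ _. False, val = \<lambda>_. {}\<rparr>"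
  assume "ConstCK Bot"
  moreover have "is_cmodel ?M"
    by (simp add: is_cmodel_def)
  ultimately show False
    using ConstCK_sat[of Bot ?M "()"] by simp
qed

section \<open>Derivations from hypotheses\<close>

inductive derivable :: "'a fm set \<Rightarrow> 'a fm \<Rightarrow> bool" for \<Gamma> where
  assm: "\<phi> \<in> \<Gamma> \<Longrightarrow> derivable \<Gamma> \<phi>"
| ax: "ConstCK \<phi> \<Longrightarrow> derivable \<Gamma> \<phi>"
| mp: "derivable \<Gamma> (Imp \<phi> \<psi>) \<Longrightarrow> derivable \<Gamma> \<phi> \<Longrightarrow> derivable \<Gamma> \<psi>"

lemma derivable_mono: "derivable \<Gamma> \<phi> \<Longrightarrow> \<Gamma> \<subseteq> \<Delta> \<Longrightarrow> derivable \<Delta> \<phi>"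
  by (induction rule: derivable.induct) (auto intro: derivable.intros)

lemma derivable_empty_iff: "derivable {} \<phi> \<longleftrightarrow> ConstCK \<phi>"
proof
  show "derivable {} \<phi> \<Longrightarrow> ConstCK \<phi>"
    by (induction rule: derivable.induct) (auto intro: ConstCK.MP)
qed (rule derivable.ax)

lemma derivable_finite_subset:
  "derivable \<Gamma> \<phi> \<Longrightarrow> \<exists>F. finite F \<and> F \<subseteq> \<Gamma> \<and> derivable F \<phi>"
proof (induction rule: derivable.induct)
  case (assm \<phi>)
  then show ?case by (intro exI[of _ "{\<phi>}"]) (auto intro: derivable.assm)
next
  case (ax \<phi>)
  then show ?case by (intro exI[of _ "{}"]) (auto intro: derivable.ax)
next
  case (mp \<phi> \<psi>)
  then obtain F G where "finite F" "F \<subseteq> \<Gamma>" "derivable F (Imp \<phi> \<psi>)"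
    and "finite G" "G \<subseteq> \<Gamma>" "derivable G \<phi>"
    by blast
  then show ?case
    by (intro exI[of _ "F \<union> G"]) (meson derivable.mp derivable_mono finite_UnI le_sup_iff sup_ge1 sup_ge2)
qed

lemma ConstCK_Imp_refl: "ConstCK (Imp \<phi> \<phi>)"
  using ConstCK.MP[OF ConstCK.MP[OF ConstCK.S ConstCK.K] ConstCK.K[of \<phi> \<phi>]] .

lemma derivable_Imp_iff: "derivable \<Gamma> (Imp \<phi> \<psi>) \<longleftrightarrow> derivable (insert \<phi> \<Gamma>) \<psi>"
proof
  show "derivable \<Gamma> (Imp \<phi> \<psi>) \<Longrightarrow> derivable (insert \<phi> \<Gamma>) \<psi>"
    by (meson derivable.assm derivable.mp derivable_mono insertI1 subset_insertI)
  show "derivable (insert \<phi> \<Gamma>) \<psi> \<Longrightarrow> derivable \<Gamma> (Imp \<phi> \<psi>)"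
  proof (induction rule: derivable.induct)
    case (assm \<chi>)
    then show ?case
      by (metis ConstCK.K ConstCK_Imp_refl derivable.assm derivable.ax derivable.mp insertE)
  next
    case (ax \<chi>)
    then show ?case by (meson ConstCK.K derivable.ax derivable.mp)
  next
    case (mp \<chi> \<theta>)
    then show ?case by (meson ConstCK.S derivable.ax derivable.mp)
  qed
qed

lemma ConstCK_Imp_iff: "ConstCK (Imp \<phi> \<psi>) \<longleftrightarrow> derivable {\<phi>} \<psi>"
  using derivable_Imp_iff[of "{}"] by (simp add: derivable_empty_iff)

lemma derivable_Conj_iff:
  "derivable \<Gamma> (Conj \<phi> \<psi>) \<longleftrightarrow> derivable \<Gamma> \<phi> \<and> derivable \<Gamma> \<psi>"
  by (meson ConstCK.C1 ConstCK.C2 ConstCK.C3 derivable.ax derivable.mp)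

lemma ConstCK_Iff_iff: "ConstCK (Iff \<phi> \<psi>) \<longleftrightarrow> ConstCK (Imp \<phi> \<psi>) \<and> ConstCK (Imp \<psi> \<phi>)"
  unfolding Iff_def derivable_empty_iff[symmetric] by (rule derivable_Conj_iff)

lemma ConstCK_BoxTo_necessitation: "ConstCK \<psi> \<Longrightarrow> ConstCK (BoxTo \<phi> \<psi>)"
proof -
  assume "ConstCK \<psi>"
  then have "ConstCK (Iff Top \<psi>)"
    unfolding ConstCK_Iff_iff Top_def Neg_def by (blast intro: ConstCK.MP ConstCK.K ConstCK.EFQ)
  then have "ConstCK (Imp (BoxTo \<phi> Top) (BoxTo \<phi> \<psi>))"
    using ConstCK.RCbox ConstCK_Iff_iff by blast
  then show ?thesis using ConstCK.MP ConstCK.CNbox by blast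
qed

lemma ConstCK_BoxTo_mono:
  assumes "ConstCK (Imp \<psi> \<chi>)"
  shows "ConstCK (Imp (BoxTo \<phi> \<psi>) (BoxTo \<phi> \<chi>))"
proof -
  have "derivable {\<psi>} (Conj \<psi> \<chi>)"
    using assms by (simp add: ConstCK_Imp_iff[symmetric] derivable_Conj_iff ConstCK_Imp_refl)
  then have "ConstCK (Iff \<psi> (Conj \<psi> \<chi>))"
    using ConstCK.C1 by (simp add: ConstCK_Iff_iff ConstCK_Imp_iff)
  then have "ConstCK (Imp (BoxTo \<phi> \<psi>) (BoxTo \<phi> (Conj \<psi> \<chi>)))"
    using ConstCK.RCbox ConstCK_Iff_iff by blast
  then have "derivable {BoxTo \<phi> \<psi>} (Conj (BoxTo \<phi> \<psi>) (BoxTo \<phi> \<chi>))"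
    by (meson ConstCK.CMbox ConstCK_Imp_iff derivable.ax derivable.mp)
  then show ?thesis
    by (simp add: ConstCK_Imp_iff derivable_Conj_iff)
qed

section \<open>Prime theories\<close>

definition deductively_closed :: "'a fm set \<Rightarrow> bool" where
  "deductively_closed \<Gamma> \<longleftrightarrow> (\<forall>\<phi>. derivable \<Gamma> \<phi> \<longrightarrow> \<phi> \<in> \<Gamma>)"

definition prime_theory :: "'a fm set \<Rightarrow> bool" where
  "prime_theory \<Gamma> \<longleftrightarrow> deductively_closed \<Gamma> \<and> Bot \<notin> \<Gamma> \<and>
     (\<forall>\<phi> \<psi>. Disj \<phi> \<psi> \<in> \<Gamma> \<longrightarrow> \<phi> \<in> \<Gamma> \<or> \<psi> \<in> \<Gamma>)"

definition box_consequents :: "'a fm \<Rightarrow> 'a fm set \<Rightarrow> 'a fm set" where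
  "box_consequents \<phi> \<Gamma> = {\<psi>. BoxTo \<phi> \<psi> \<in> \<Gamma>}"

context
  fixes \<Gamma> :: "'a fm set"
  assumes closed: "deductively_closed \<Gamma>"
begin

lemma closed_derivable: "derivable \<Gamma> \<phi> \<Longrightarrow> \<phi> \<in> \<Gamma>"
  using closed unfolding deductively_closed_def by blast

lemma closed_ConstCK: "ConstCK \<phi> \<Longrightarrow> \<phi> \<in> \<Gamma>"
  by (simp add: closed_derivable derivable.ax)

lemma closed_mp: "Imp \<phi> \<psi> \<in> \<Gamma> \<Longrightarrow> \<phi> \<in> \<Gamma> \<Longrightarrow> \<psi> \<in> \<Gamma>"
  by (meson closed_derivable derivable.assm derivable.mp)

lemma closed_ConstCK_mp: "ConstCK (Imp \<phi> \<psi>) \<Longrightarrow> \<phi> \<in> \<Gamma> \<Longrightarrow> \<psi> \<in> \<Gamma>"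
  by (meson closed_ConstCK closed_mp)

lemma closed_Conj_iff: "Conj \<phi> \<psi> \<in> \<Gamma> \<longleftrightarrow> \<phi> \<in> \<Gamma> \<and> \<psi> \<in> \<Gamma>"
  by (meson closed_derivable derivable.assm derivable_Conj_iff)

lemma closed_Imp_iff: "Imp \<phi> \<psi> \<in> \<Gamma> \<longleftrightarrow> derivable (insert \<phi> \<Gamma>) \<psi>"
  by (meson closed_derivable derivable.assm derivable_Imp_iff)

lemma closed_BoxTo_if_derivable:
  "derivable (box_consequents \<phi> \<Gamma>) \<psi> \<Longrightarrow> BoxTo \<phi> \<psi> \<in> \<Gamma>"
proof (induction rule: derivable.induct)
  case (assm \<psi>)
  then show ?case by (simp add: box_consequents_def)
next
  case (ax \<psi>)
  then show ?case by (simp add: closed_ConstCK ConstCK_BoxTo_necessitation)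
next
  case (mp \<chi> \<psi>)
  then have "BoxTo \<phi> (Conj (Imp \<chi> \<psi>) \<chi>) \<in> \<Gamma>"
    using ConstCK.CCbox closed_ConstCK_mp closed_Conj_iff by blast
  moreover have "ConstCK (Imp (Conj (Imp \<chi> \<psi>) \<chi>) \<psi>)"
    by (meson ConstCK_Imp_iff derivable.assm derivable.mp derivable_Conj_iff singletonI)
  ultimately show ?case
    using ConstCK_BoxTo_mono closed_ConstCK_mp by blast
qed

lemma closed_DiaTo_if_derivable:
  assumes "DiaTo \<phi> \<theta> \<in> \<Gamma>" and "derivable (insert \<theta> (box_consequents \<phi> \<Gamma>)) \<psi>"
  shows "DiaTo \<phi> \<psi> \<in> \<Gamma>"
proof -
  have "BoxTo \<phi> (Imp \<theta> \<psi>) \<in> \<Gamma>"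
    using assms(2) by (simp add: closed_BoxTo_if_derivable derivable_Imp_iff)
  then show ?thesis
    using assms(1) ConstCK.CKdia closed_ConstCK_mp closed_mp by blast
qed

lemma closed_BoxTo_antecedent_cong:
  "ConstCK (Iff \<phi> \<phi>') \<Longrightarrow> BoxTo \<phi> \<psi> \<in> \<Gamma> \<longleftrightarrow> BoxTo \<phi>' \<psi> \<in> \<Gamma>"
  using ConstCK.RAbox ConstCK_Iff_iff closed_ConstCK_mp by blast

lemma closed_DiaTo_antecedent_cong:
  "ConstCK (Iff \<phi> \<phi>') \<Longrightarrow> DiaTo \<phi> \<psi> \<in> \<Gamma> \<longleftrightarrow> DiaTo \<phi>' \<psi> \<in> \<Gamma>"
  using ConstCK.RAdia ConstCK_Iff_iff closed_ConstCK_mp by blast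

end

lemma prime_theory_closed: "prime_theory \<Gamma> \<Longrightarrow> deductively_closed \<Gamma>"
  by (simp add: prime_theory_def)

lemma prime_theory_Bot: "prime_theory \<Gamma> \<Longrightarrow> Bot \<notin> \<Gamma>"
  by (simp add: prime_theory_def)

lemma prime_theory_Disj_iff: "prime_theory \<Gamma> \<Longrightarrow> Disj \<phi> \<psi> \<in> \<Gamma> \<longleftrightarrow> \<phi> \<in> \<Gamma> \<or> \<psi> \<in> \<Gamma>"
  unfolding prime_theory_def by (meson ConstCK.D1 ConstCK.D2 closed_ConstCK_mp)

lemma prime_theory_DiaTo_Bot: "prime_theory \<Gamma> \<Longrightarrow> DiaTo \<phi> Bot \<notin> \<Gamma>"
  using ConstCK.CNdia[of \<phi>, unfolded Neg_def] closed_ConstCK_mp prime_theory_closed prime_theory_Bot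
  by blast

lemma exists_maximal_non_derivable:
  assumes "\<not> derivable \<Gamma> \<phi>"
  shows "\<exists>M. \<Gamma> \<subseteq> M \<and> \<not> derivable M \<phi> \<and> (\<forall>\<chi>. \<chi> \<notin> M \<longrightarrow> derivable (insert \<chi> M) \<phi>)"
proof -
  define A where "A = {\<Delta>. \<Gamma> \<subseteq> \<Delta> \<and> \<not> derivable \<Delta> \<phi>}"
  have "\<exists>M\<in>A. \<forall>\<Delta>\<in>A. M \<subseteq> \<Delta> \<longrightarrow> \<Delta> = M"
  proof (rule subset_Zorn_nonempty)
    show "A \<noteq> {}" using assms A_def by blast
  next
    fix C assume C: "C \<noteq> {}" "subset.chain A C"
    then have "C \<subseteq> A" by (simp add: subset.chain_def)
    have "\<not> derivable (\<Union>C) \<phi>"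
    proof
      assume "derivable (\<Union>C) \<phi>"
      then obtain F where F: "finite F" "F \<subseteq> \<Union>C" "derivable F \<phi>"
        using derivable_finite_subset by blast
      then obtain \<Delta> where "\<Delta> \<in> C" "F \<subseteq> \<Delta>"
        using finite_subset_Union_chain[OF F(1,2) C] by blast
      then show False using F(3) derivable_mono \<open>C \<subseteq> A\<close> A_def by blast
    qed
    then show "\<Union>C \<in> A" using C \<open>C \<subseteq> A\<close> A_def by blast
  qed
  then obtain M where "M \<in> A" and max: "\<And>\<Delta>. \<Delta> \<in> A \<Longrightarrow> M \<subseteq> \<Delta> \<Longrightarrow> \<Delta> = M"
    by blast
  have "derivable (insert \<chi> M) \<phi>" if "\<chi> \<notin> M" for \<chi>
    using max[of "insert \<chi> M"] that \<open>M \<in> A\<close> unfolding A_def by blast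
  with \<open>M \<in> A\<close> show ?thesis
    unfolding A_def by blast
qed

lemma prime_theory_if_maximal_non_derivable:
  assumes "\<not> derivable M \<phi>" and max: "\<And>\<chi>. \<chi> \<notin> M \<Longrightarrow> derivable (insert \<chi> M) \<phi>"
  shows "prime_theory M"
proof -
  have closed: "deductively_closed M"
    using assms derivable.mp derivable_Imp_iff unfolding deductively_closed_def by blast
  have "Bot \<notin> M"
    using assms(1) by (meson ConstCK.EFQ derivable.assm derivable.ax derivable.mp)
  moreover have "\<chi> \<in> M \<or> \<theta> \<in> M" if "Disj \<chi> \<theta> \<in> M" for \<chi> \<theta>
  proof (rule ccontr)
    assume "\<not> (\<chi> \<in> M \<or> \<theta> \<in> M)"
    then have "derivable M (Imp \<chi> \<phi>)" and "derivable M (Imp \<theta> \<phi>)"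
      using max derivable_Imp_iff by blast+
    then have "derivable M \<phi>"
      using that by (meson ConstCK.D3 derivable.assm derivable.ax derivable.mp)
    with assms(1) show False ..
  qed
  ultimately show ?thesis
    using closed by (simp add: prime_theory_def)
qed

lemma lindenbaum:
  assumes "\<not> derivable \<Gamma> \<phi>"
  obtains \<Delta> where "\<Gamma> \<subseteq> \<Delta>" and "prime_theory \<Delta>" and "\<phi> \<notin> \<Delta>"
proof -
  obtain M where "\<Gamma> \<subseteq> M" and M: "\<not> derivable M \<phi>"
    and max: "\<And>\<chi>. \<chi> \<notin> M \<Longrightarrow> derivable (insert \<chi> M) \<phi>"
    using exists_maximal_non_derivable[OF assms] by blast
  from M max have "prime_theory M"
    by (rule prime_theory_if_maximal_non_derivable)
  then show ?thesis
    using that \<open>\<Gamma> \<subseteq> M\<close> M derivable.assm by blast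
qed

section \<open>The canonical model\<close>

text \<open>
  The world \<open>(\<Gamma>, \<psi>)\<close> is encoded as a formula set, since the theorem asks for a countermodel
  with worlds of type \<^typ>\<open>'a fm set\<close>.
\<close>

definition canonical_world :: "'a fm set \<Rightarrow> 'a fm \<Rightarrow> 'a fm set" where
  "canonical_world \<Gamma> \<psi> = (\<lambda>\<phi>. Conj \<phi> Bot) ` \<Gamma> \<union> {Disj \<psi> Bot}"

definition theory_of :: "'a fm set \<Rightarrow> 'a fm set" where
  "theory_of X = {\<phi>. Conj \<phi> Bot \<in> X}"

definition target_of :: "'a fm set \<Rightarrow> 'a fm" where
  "target_of X = (THE \<psi>. Disj \<psi> Bot \<in> X)"

lemma theory_of_canonical_world [simp]: "theory_of (canonical_world \<Gamma> \<psi>) = \<Gamma>"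
  by (auto simp: theory_of_def canonical_world_def)

lemma target_of_canonical_world [simp]: "target_of (canonical_world \<Gamma> \<psi>) = \<psi>"
  by (auto simp: target_of_def canonical_world_def)

definition canonical_worlds :: "'a fm set set" where
  "canonical_worlds = {canonical_world \<Gamma> \<psi> | \<Gamma> \<psi>. prime_theory \<Gamma>}"

lemma canonical_world_in_canonical_worlds [intro]:
  "prime_theory \<Gamma> \<Longrightarrow> canonical_world \<Gamma> \<psi> \<in> canonical_worlds"
  by (auto simp: canonical_worlds_def)

lemma prime_theory_of: "X \<in> canonical_worlds \<Longrightarrow> prime_theory (theory_of X)"
  by (auto simp: canonical_worlds_def)

definition canonical_step :: "'a fm \<Rightarrow> 'a fm set \<Rightarrow> 'a fm set \<Rightarrow> bool" where
  "canonical_step \<phi> X Y \<longleftrightarrow> box_consequents \<phi> (theory_of X) \<subseteq> theory_of Y \<and>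
     (DiaTo \<phi> (target_of X) \<notin> theory_of X \<longrightarrow> target_of X \<notin> theory_of Y)"

definition canonical_truth_set :: "'a fm \<Rightarrow> 'a fm set set" where
  "canonical_truth_set \<phi> = {X \<in> canonical_worlds. \<phi> \<in> theory_of X}"

definition canonical_model :: "('a fm set, 'a) cmodel" where
  "canonical_model =
    \<lparr>worlds = canonical_worlds,
     leq = (\<lambda>X Y. X \<in> canonical_worlds \<and> Y \<in> canonical_worlds \<and> theory_of X \<subseteq> theory_of Y),
     rel = (\<lambda>S X Y. X \<in> canonical_worlds \<and> Y \<in> canonical_worlds \<and>
              (\<exists>\<phi>. S = canonical_truth_set \<phi> \<and> canonical_step \<phi> X Y)),
     val = (\<lambda>X. {p. Atom p \<in> theory_of X})\<rparr>"

lemma canonical_model_simps [simp]: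
  "worlds canonical_model = canonical_worlds"
  "leq canonical_model X Y \<longleftrightarrow>
     X \<in> canonical_worlds \<and> Y \<in> canonical_worlds \<and> theory_of X \<subseteq> theory_of Y"
  "val canonical_model X = {p. Atom p \<in> theory_of X}"
  by (simp_all add: canonical_model_def)

lemma rel_canonical_model:
  "rel canonical_model S X Y \<longleftrightarrow> X \<in> canonical_worlds \<and> Y \<in> canonical_worlds \<and>
     (\<exists>\<phi>. S = canonical_truth_set \<phi> \<and> canonical_step \<phi> X Y)"
  by (simp add: canonical_model_def)

lemma canonical_model_is_cmodel: "is_cmodel canonical_model"
proof -
  obtain \<Gamma> :: "'a fm set" where "prime_theory \<Gamma>"
    using lindenbaum[of "{}" Bot] ConstCK_not_Bot by (auto simp: derivable_empty_iff)
  then have "canonical_worlds \<noteq> ({} :: 'a fm set set)"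
    by blast
  then show ?thesis
    by (auto simp: is_cmodel_def rel_canonical_model)
qed

lemma ConstCK_Imp_if_canonical_truth_set_subset:
  assumes "canonical_truth_set \<phi> \<subseteq> canonical_truth_set \<psi>"
  shows "ConstCK (Imp \<phi> \<psi>)"
proof (rule ccontr)
  assume "\<not> ConstCK (Imp \<phi> \<psi>)"
  then obtain \<Delta> where "\<phi> \<in> \<Delta>" "prime_theory \<Delta>" "\<psi> \<notin> \<Delta>"
    using lindenbaum[of "{\<phi>}" \<psi>] by (auto simp: ConstCK_Imp_iff)
  then show False
    using assms by (auto simp: canonical_truth_set_def)
qed

lemma canonical_step_antecedent_cong:
  assumes "X \<in> canonical_worlds" and "canonical_truth_set \<phi> = canonical_truth_set \<phi>'"
  shows "canonical_step \<phi> X Y \<longleftrightarrow> canonical_step \<phi>' X Y"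
proof -
  have "ConstCK (Iff \<phi> \<phi>')"
    using assms(2) by (simp add: ConstCK_Iff_iff ConstCK_Imp_if_canonical_truth_set_subset)
  then show ?thesis
    using prime_theory_closed[OF prime_theory_of[OF assms(1)]]
    by (simp add: canonical_step_def box_consequents_def
        closed_BoxTo_antecedent_cong closed_DiaTo_antecedent_cong)
qed

lemma rel_canonical_truth_set:
  "rel canonical_model (canonical_truth_set \<phi>) X Y \<longleftrightarrow>
     X \<in> canonical_worlds \<and> Y \<in> canonical_worlds \<and> canonical_step \<phi> X Y"
  using canonical_step_antecedent_cong by (auto simp: rel_canonical_model)

lemma closed_theory_of: "X \<in> canonical_worlds \<Longrightarrow> deductively_closed (theory_of X)"
  by (simp add: prime_theory_closed prime_theory_of)

lemma exists_canonical_step_omitting: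
  assumes "prime_theory \<Gamma>" and "BoxTo \<phi> \<psi> \<notin> \<Gamma>"
  shows "\<exists>\<Delta>. prime_theory \<Delta> \<and> \<psi> \<notin> \<Delta> \<and>
    canonical_step \<phi> (canonical_world \<Gamma> Bot) (canonical_world \<Delta> Bot)"
proof -
  have "\<not> derivable (box_consequents \<phi> \<Gamma>) \<psi>"
    using assms closed_BoxTo_if_derivable prime_theory_closed by blast
  then obtain \<Delta> where "box_consequents \<phi> \<Gamma> \<subseteq> \<Delta>" and "prime_theory \<Delta>" and "\<psi> \<notin> \<Delta>"
    by (rule lindenbaum)
  then show ?thesis
    by (auto simp: canonical_step_def prime_theory_Bot)
qed

lemma exists_canonical_step_containing:
  assumes W: "W \<in> canonical_worlds" and "DiaTo \<phi> \<psi> \<in> theory_of W"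
  shows "\<exists>\<Delta>. prime_theory \<Delta> \<and> \<psi> \<in> \<Delta> \<and> canonical_step \<phi> W (canonical_world \<Delta> Bot)"
proof -
  txt \<open>The successor must omit \<open>\<tau>\<close>: the target of \<open>W\<close> if that is required, else \<open>\<bottom>\<close>.\<close>
  obtain \<tau> where \<tau>: "DiaTo \<phi> \<tau> \<notin> theory_of W"
    and target: "DiaTo \<phi> (target_of W) \<notin> theory_of W \<Longrightarrow> \<tau> = target_of W"
  proof (cases "DiaTo \<phi> (target_of W) \<in> theory_of W")
    case True
    then show ?thesis
      using that[of Bot] prime_theory_DiaTo_Bot[OF prime_theory_of[OF W]] by blast
  qed (use that in blast)
  have "\<not> derivable (insert \<psi> (box_consequents \<phi> (theory_of W))) \<tau>"
    using closed_DiaTo_if_derivable[OF closed_theory_of[OF W] assms(2)] \<tau> by blast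
  then obtain \<Delta> where "insert \<psi> (box_consequents \<phi> (theory_of W)) \<subseteq> \<Delta>"
    and "prime_theory \<Delta>" and "\<tau> \<notin> \<Delta>"
    by (rule lindenbaum)
  then show ?thesis
    using target by (auto simp: canonical_step_def)
qed

lemma canonical_sat_Imp:
  assumes X: "X \<in> canonical_worlds"
    and IH: "\<And>Y. Y \<in> canonical_worlds \<Longrightarrow> sat canonical_model Y \<phi> \<longleftrightarrow> \<phi> \<in> theory_of Y"
      "\<And>Y. Y \<in> canonical_worlds \<Longrightarrow> sat canonical_model Y \<psi> \<longleftrightarrow> \<psi> \<in> theory_of Y"
  shows "sat canonical_model X (Imp \<phi> \<psi>) \<longleftrightarrow> Imp \<phi> \<psi> \<in> theory_of X"
proof
  assume sat: "sat canonical_model X (Imp \<phi> \<psi>)"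
  show "Imp \<phi> \<psi> \<in> theory_of X"
  proof (rule ccontr)
    assume "Imp \<phi> \<psi> \<notin> theory_of X"
    then have "\<not> derivable (insert \<phi> (theory_of X)) \<psi>"
      using closed_Imp_iff[OF closed_theory_of[OF X]] by blast
    then obtain \<Delta> where "insert \<phi> (theory_of X) \<subseteq> \<Delta>" and "prime_theory \<Delta>" and "\<psi> \<notin> \<Delta>"
      by (rule lindenbaum)
    then show False
      using sat X IH[of "canonical_world \<Delta> Bot"] by auto
  qed
next
  assume imp: "Imp \<phi> \<psi> \<in> theory_of X"
  have "\<psi> \<in> theory_of W"
    if "W \<in> canonical_worlds" "theory_of X \<subseteq> theory_of W" "\<phi> \<in> theory_of W" for W
    using imp that closed_mp[OF closed_theory_of] by blast
  then show "sat canonical_model X (Imp \<phi> \<psi>)"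
    using IH by auto
qed

lemma canonical_sat_BoxTo:
  assumes X: "X \<in> canonical_worlds"
    and IH: "\<And>Y. Y \<in> canonical_worlds \<Longrightarrow> sat canonical_model Y \<phi> \<longleftrightarrow> \<phi> \<in> theory_of Y"
      "\<And>Y. Y \<in> canonical_worlds \<Longrightarrow> sat canonical_model Y \<psi> \<longleftrightarrow> \<psi> \<in> theory_of Y"
  shows "sat canonical_model X (BoxTo \<phi> \<psi>) \<longleftrightarrow> BoxTo \<phi> \<psi> \<in> theory_of X"
proof -
  have "{u \<in> worlds canonical_model. sat canonical_model u \<phi>} = canonical_truth_set \<phi>"
    using IH(1) by (auto simp: canonical_truth_set_def)
  then have "sat canonical_model X (BoxTo \<phi> \<psi>) \<longleftrightarrow>
      (\<forall>W\<in>canonical_worlds. \<forall>Y\<in>canonical_worlds. theory_of X \<subseteq> theory_of W \<longrightarrow>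
         canonical_step \<phi> W Y \<longrightarrow> \<psi> \<in> theory_of Y)"
    using X IH(2) by (simp add: rel_canonical_truth_set)
  also have "\<dots> \<longleftrightarrow> BoxTo \<phi> \<psi> \<in> theory_of X"
  proof
    assume steps: "\<forall>W\<in>canonical_worlds. \<forall>Y\<in>canonical_worlds. theory_of X \<subseteq> theory_of W \<longrightarrow>
      canonical_step \<phi> W Y \<longrightarrow> \<psi> \<in> theory_of Y"
    show "BoxTo \<phi> \<psi> \<in> theory_of X"
    proof (rule ccontr)
      assume "BoxTo \<phi> \<psi> \<notin> theory_of X"
      then obtain \<Delta> where "prime_theory \<Delta>" and "\<psi> \<notin> \<Delta>"
        and step: "canonical_step \<phi> (canonical_world (theory_of X) Bot) (canonical_world \<Delta> Bot)"
        using exists_canonical_step_omitting prime_theory_of[OF X] by blast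
      have "canonical_world (theory_of X) Bot \<in> canonical_worlds"
        and "canonical_world \<Delta> Bot \<in> canonical_worlds"
        and "theory_of X \<subseteq> theory_of (canonical_world (theory_of X) Bot)"
        using prime_theory_of[OF X] \<open>prime_theory \<Delta>\<close> by auto
      from steps[rule_format, OF this step] and \<open>\<psi> \<notin> \<Delta>\<close> show False
        by simp
    qed
  next
    assume "BoxTo \<phi> \<psi> \<in> theory_of X"
    then show "\<forall>W\<in>canonical_worlds. \<forall>Y\<in>canonical_worlds. theory_of X \<subseteq> theory_of W \<longrightarrow>
      canonical_step \<phi> W Y \<longrightarrow> \<psi> \<in> theory_of Y"
      by (auto simp: canonical_step_def box_consequents_def)
  qed
  finally show ?thesis .
qed

lemma canonical_sat_DiaTo:
  assumes X: "X \<in> canonical_worlds"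
    and IH: "\<And>Y. Y \<in> canonical_worlds \<Longrightarrow> sat canonical_model Y \<phi> \<longleftrightarrow> \<phi> \<in> theory_of Y"
      "\<And>Y. Y \<in> canonical_worlds \<Longrightarrow> sat canonical_model Y \<psi> \<longleftrightarrow> \<psi> \<in> theory_of Y"
  shows "sat canonical_model X (DiaTo \<phi> \<psi>) \<longleftrightarrow> DiaTo \<phi> \<psi> \<in> theory_of X"
proof -
  have "{u \<in> worlds canonical_model. sat canonical_model u \<phi>} = canonical_truth_set \<phi>"
    using IH(1) by (auto simp: canonical_truth_set_def)
  then have "sat canonical_model X (DiaTo \<phi> \<psi>) \<longleftrightarrow>
      (\<forall>W\<in>canonical_worlds. theory_of X \<subseteq> theory_of W \<longrightarrow>
         (\<exists>Y\<in>canonical_worlds. canonical_step \<phi> W Y \<and> \<psi> \<in> theory_of Y))"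
    using X IH(2) by (auto simp: rel_canonical_truth_set)
  also have "\<dots> \<longleftrightarrow> DiaTo \<phi> \<psi> \<in> theory_of X"
  proof
    assume succ: "\<forall>W\<in>canonical_worlds. theory_of X \<subseteq> theory_of W \<longrightarrow>
      (\<exists>Y\<in>canonical_worlds. canonical_step \<phi> W Y \<and> \<psi> \<in> theory_of Y)"
    show "DiaTo \<phi> \<psi> \<in> theory_of X"
    proof (rule ccontr)
      assume "DiaTo \<phi> \<psi> \<notin> theory_of X"
      then have "\<psi> \<notin> theory_of Y" if "canonical_step \<phi> (canonical_world (theory_of X) \<psi>) Y" for Y
        using that by (simp add: canonical_step_def)
      moreover have "\<exists>Y\<in>canonical_worlds.
          canonical_step \<phi> (canonical_world (theory_of X) \<psi>) Y \<and> \<psi> \<in> theory_of Y"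
        using prime_theory_of[OF X] by (intro succ[rule_format]) auto
      ultimately show False
        by blast
    qed
  next
    assume dia: "DiaTo \<phi> \<psi> \<in> theory_of X"
    show "\<forall>W\<in>canonical_worlds. theory_of X \<subseteq> theory_of W \<longrightarrow>
      (\<exists>Y\<in>canonical_worlds. canonical_step \<phi> W Y \<and> \<psi> \<in> theory_of Y)"
    proof (intro ballI impI)
      fix W assume "W \<in> canonical_worlds" and "theory_of X \<subseteq> theory_of W"
      then obtain \<Delta> where "prime_theory \<Delta>" and "\<psi> \<in> \<Delta>"
        and "canonical_step \<phi> W (canonical_world \<Delta> Bot)"
        using dia exists_canonical_step_containing by blast
      then show "\<exists>Y\<in>canonical_worlds. canonical_step \<phi> W Y \<and> \<psi> \<in> theory_of Y"
        by (intro bexI[of _ "canonical_world \<Delta> Bot"]) auto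
    qed
  qed
  finally show ?thesis .
qed

lemma canonical_sat_iff:
  "X \<in> canonical_worlds \<Longrightarrow> sat canonical_model X \<phi> \<longleftrightarrow> \<phi> \<in> theory_of X"
proof (induction \<phi> arbitrary: X)
  case (Imp \<phi> \<psi>)
  show ?case by (rule canonical_sat_Imp[OF Imp.prems Imp.IH])
next
  case (BoxTo \<phi> \<psi>)
  show ?case by (rule canonical_sat_BoxTo[OF BoxTo.prems BoxTo.IH])
next
  case (DiaTo \<phi> \<psi>)
  show ?case by (rule canonical_sat_DiaTo[OF DiaTo.prems DiaTo.IH])
qed (simp_all add: closed_Conj_iff closed_theory_of prime_theory_Disj_iff prime_theory_of
    prime_theory_Bot)

lemma ConstCK_if_valid_in_canonical_model:
  assumes "valid_in canonical_model \<phi>"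
  shows "ConstCK \<phi>"
proof (rule ccontr)
  assume "\<not> ConstCK \<phi>"
  then obtain \<Delta> where "prime_theory \<Delta>" and "\<phi> \<notin> \<Delta>"
    using lindenbaum[of "{}" \<phi>] by (auto simp: derivable_empty_iff)
  then show False
    using assms canonical_sat_iff[of "canonical_world \<Delta> Bot" \<phi>] by (auto simp: valid_in_def)
qed

theorem theorem9:
  fixes \<phi> :: "'a fm"
  shows "(ConstCK \<phi> \<longleftrightarrow>
            (\<forall>M :: ('a fm set, 'a) cmodel. is_cmodel M \<longrightarrow> valid_in M \<phi>))
       \<and> (\<forall>M :: ('w, 'a) cmodel. is_cmodel M \<longrightarrow> ConstCK \<phi> \<longrightarrow> valid_in M \<phi>)"
proof (intro conjI allI impI iffI)
  fix M :: "('a fm set, 'a) cmodel"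
  assume "ConstCK \<phi>" and "is_cmodel M"
  then show "valid_in M \<phi>"
    by (rule ConstCK_valid)
next
  assume "\<forall>M :: ('a fm set, 'a) cmodel. is_cmodel M \<longrightarrow> valid_in M \<phi>"
  then show "ConstCK \<phi>"
    using canonical_model_is_cmodel by (blast intro: ConstCK_if_valid_in_canonical_model)
next
  fix M :: "('w, 'a) cmodel"
  assume "is_cmodel M" and "ConstCK \<phi>"
  then show "valid_in M \<phi>"
    by (simp add: ConstCK_valid)
qed

end
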